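(* Let $q\ge 2$, $n\ge 1$, $h\in F(n,q)$ and $k=\kappa^{\min}(h)$. Then $\Omega(h)+k\le \mathcal{L}^*(h)$.
   Context: Let $q\ge 2$, $A=\{0,1,\dots,q-1\}$, $[n]=\{1,\dots,n\}$, and let $F(n,q)$ be the set of all maps $A^n\to A^n$. For $f\in F(m,q)$ and $i\in[m]$, $f_i$ is the $i$-th coordinate function and $f^i(x)=(x_1,\dots,x_{i-1},f_i(x),x_{i+1},\dots,x_m)$; for a word $w=(w_1,\dots,w_t)$ over $[m]$, $f^w=f^{w_t}\circ\cdots\circ f^{w_1}$. $\Pi([m])$ is the set of permutations of $[m]$ written as words $(w_1,\dots,w_m)$. $\mathrm{pr}_{[n]}:A^m\to A^n$ is the projection onto the first $n$ coordinates. For $m\ge n$, $(f,w)$ with $f\in F(m,q)$, $w\in\Pi([m])$ sequentializes $h\in F(n,q)$ if $\mathrm{pr}_{[n]}\circ f^w=h\circ\mathrm{pr}_{[n]}$. $\kappa^{\min}(h)$ is the smallest $k\ge 0$ such that there exist $f\in F(n+k,q)$ and $w\in\Pi([n+k])$ with $(f,w)$ sequentializing $h$. A coordinate function $h_i$ is trivial if $h_i(x)=x_i$ for all $x$; $\Omega(h)$ is the number of $i\in[n]$ such that $h_i$ is not trivial. $F^*(m,q)$ is the set of $g\in F(m,q)$ that update at most one coordinate, i.e. there is $i\in[m]$ with $g_j(x)=x_j$ for all $j\ne i$ and all $x\in A^m$. For $m\ge n$, $\mathcal{L}(h\,|\,m)$ is the smallest $t\ge 0$ such that there exist $g^{(1)},\dots,g^{(t)}\in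 F^*(m,q)$ with $\mathrm{pr}_{[n]}\circ g^{(t)}\circ\cdots\circ g^{(1)}=h\circ\mathrm{pr}_{[n]}$, and $\mathcal{L}^*(h)=\min\{\mathcal{L}(h\,|\,m): m\ge n\}$. *)

theory Defs
  imports Main
begin

text \<open>Points of A^m, A = {0..<q}, are lists of length m with entries < q.
  Coordinates are 0-based: coordinate i of the paper is list index i-1.\<close>

definition space :: "nat \<Rightarrow> nat \<Rightarrow> nat list set" where
  "space q m = {xs. length xs = m \<and> set xs \<subseteq> {0..<q}}"

text \<open>f \<in> F(m,q): a map A^m \<rightarrow> A^m (only its values on A^m matter).\<close>
definition inF :: "nat \<Rightarrow> nat \<Rightarrow> (nat list \<Rightarrow> nat list) \<Rightarrow> bool" where
  "inF m q f \<longleftrightarrow> (\<forall>x\<in>space q m. f x \<in> space q m)"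

definition upd :: "(nat list \<Rightarrow> nat list) \<Rightarrow> nat \<Rightarrow> nat list \<Rightarrow> nat list" where
  "upd f i x = x[i := f x ! i]"

definition seq_upd :: "(nat list \<Rightarrow> nat list) \<Rightarrow> nat list \<Rightarrow> nat list \<Rightarrow> nat list" where
  "seq_upd f w x = fold (\<lambda>i y. upd f i y) w x"

definition perm_word :: "nat \<Rightarrow> nat list \<Rightarrow> bool" where
  "perm_word m w \<longleftrightarrow> distinct w \<and> set w = {0..<m}"

text \<open>(f,w) sequentializes h (pr_{[n]} = take n).\<close>
definition sequentializes :: "nat \<Rightarrow> nat \<Rightarrow> (nat list \<Rightarrow> nat list) \<Rightarrow> nat
    \<Rightarrow> (nat list \<Rightarrow> nat list) \<Rightarrow> nat list \<Rightarrow> bool" where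
  "sequentializes q n h m f w \<longleftrightarrow> n \<le> m \<and>
     (\<forall>x\<in>space q m. take n (seq_upd f w x) = h (take n x))"

definition kappa_min :: "nat \<Rightarrow> nat \<Rightarrow> (nat list \<Rightarrow> nat list) \<Rightarrow> nat" where
  "kappa_min q n h = (LEAST k. \<exists>f w. inF (n + k) q f \<and> perm_word (n + k) w \<and>
        sequentializes q n h (n + k) f w)"

definition trivial_coord :: "nat \<Rightarrow> nat \<Rightarrow> (nat list \<Rightarrow> nat list) \<Rightarrow> nat \<Rightarrow> bool" where
  "trivial_coord q n h i \<longleftrightarrow> (\<forall>x\<in>space q n. h x ! i = x ! i)"

definition Omega :: "nat \<Rightarrow> nat \<Rightarrow> (nat list \<Rightarrow> nat list) \<Rightarrow> nat" where
  "Omega q n h = card {i. i < n \<and> \<not> trivial_coord q n h i}"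

definition inFstar :: "nat \<Rightarrow> nat \<Rightarrow> (nat list \<Rightarrow> nat list) \<Rightarrow> bool" where
  "inFstar m q g \<longleftrightarrow> inF m q g \<and>
     (\<exists>i<m. \<forall>j<m. j \<noteq> i \<longrightarrow> (\<forall>x\<in>space q m. g x ! j = x ! j))"

definition realizes :: "nat \<Rightarrow> nat \<Rightarrow> (nat list \<Rightarrow> nat list) \<Rightarrow> nat \<Rightarrow> nat \<Rightarrow> bool" where
  "realizes q n h m t \<longleftrightarrow> (\<exists>gs. length gs = t \<and> (\<forall>g\<in>set gs. inFstar m q g) \<and>
     (\<forall>x\<in>space q m. take n (fold (\<lambda>g y. g y) gs x) = h (take n x)))"

definition L :: "nat \<Rightarrow> nat \<Rightarrow> (nat list \<Rightarrow> nat list) \<Rightarrow> nat \<Rightarrow> nat" where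
  "L q n h m = (LEAST t. realizes q n h m t)"

text \<open>L*(h) = min over m \<ge> n of L(h|m), ranging only over m for which L(h|m) is defined.\<close>
definition Lstar :: "nat \<Rightarrow> nat \<Rightarrow> (nat list \<Rightarrow> nat list) \<Rightarrow> nat" where
  "Lstar q n h = (LEAST t. \<exists>m\<ge>n. realizes q n h m t)"

end

theory Submission imports Defs begin

text \<open>Take a shortest realisation g1, ..., gt of h by single-coordinate updates and call a
  step final if it is the last one to write some output coordinate i < n. An output coordinate
  that is never written stays unchanged, so every non-trivial coordinate of h has a final step
  and there are at least \<Omega>(h) final steps. Give every final step the variable of its own
  coordinate and every other step a fresh auxiliary variable. Updating these variables once each,
  in the order of the steps, sequentializes h: a variable, when updated, evaluates its step on the
  state decoded from the most recent writes. This uses t - \<Omega>(h) auxiliary variables at most.\<close>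

lemma space_iff_nth: "x \<in> space q m \<longleftrightarrow> length x = m \<and> (\<forall>i<m. x ! i < q)"
  unfolding space_def by (fastforce simp: in_set_conv_nth)

lemma space_nth_less: "x \<in> space q m \<Longrightarrow> i < m \<Longrightarrow> x ! i < q"
  by (simp add: space_iff_nth)

lemma space_list_update: "x \<in> space q m \<Longrightarrow> v < q \<Longrightarrow> x[i := v] \<in> space q m"
  unfolding space_def by (auto dest!: subsetD[OF set_update_subset_insert])

lemma space_pad: "y \<in> space q N \<Longrightarrow> n \<le> N \<Longrightarrow> n \<le> m \<Longrightarrow> 0 < q
    \<Longrightarrow> take n y @ replicate (m - n) 0 \<in> space q m"
  unfolding space_def by (auto dest: in_set_takeD)

lemma inFstar_single_update:
  assumes "i < m" "\<And>x. x \<in> space q m \<Longrightarrow> v x < q"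
  shows "inFstar m q (\<lambda>x. x[i := v x])"
  unfolding inFstar_def inF_def using assms by (auto intro: space_list_update)

definition updated_coord :: "nat \<Rightarrow> nat \<Rightarrow> (nat list \<Rightarrow> nat list) \<Rightarrow> nat" where
  "updated_coord m q g = (SOME i. i < m \<and> (\<forall>j<m. j \<noteq> i \<longrightarrow> (\<forall>x\<in>space q m. g x ! j = x ! j)))"

lemma updated_coord:
  assumes "inFstar m q g"
  shows "updated_coord m q g < m"
    and "j < m \<Longrightarrow> j \<noteq> updated_coord m q g \<Longrightarrow> x \<in> space q m \<Longrightarrow> g x ! j = x ! j"
proof -
  have "\<exists>i. i < m \<and> (\<forall>j<m. j \<noteq> i \<longrightarrow> (\<forall>x\<in>space q m. g x ! j = x ! j))"
    using assms unfolding inFstar_def by blast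
  from someI_ex[OF this]
  show "updated_coord m q g < m"
    and "j < m \<Longrightarrow> j \<noteq> updated_coord m q g \<Longrightarrow> x \<in> space q m \<Longrightarrow> g x ! j = x ! j"
    unfolding updated_coord_def by blast+
qed

section \<open>From a realisation to a sequentialization\<close>

locale realization =
  fixes q n m :: nat and h :: "nat list \<Rightarrow> nat list" and gs :: "(nat list \<Rightarrow> nat list) list"
  assumes q_pos: "0 < q" and n_le_m: "n \<le> m"
    and gs_single: "\<forall>g\<in>set gs. inFstar m q g"
    and gs_realizes: "\<forall>x\<in>space q m. take n (fold (\<lambda>g y. g y) gs x) = h (take n x)"
begin

abbreviation t :: nat where "t \<equiv> length gs"

definition coord :: "nat \<Rightarrow> nat" where "coord s = updated_coord m q (gs ! s)"

lemma coord_less: "s < t \<Longrightarrow> coord s < m"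
  unfolding coord_def using gs_single updated_coord(1) by auto

lemma step_other_coord:
  "s < t \<Longrightarrow> j < m \<Longrightarrow> j \<noteq> coord s \<Longrightarrow> x \<in> space q m \<Longrightarrow> (gs ! s) x ! j = x ! j"
  unfolding coord_def using gs_single updated_coord(2) nth_mem by blast

lemma step_space: "s < t \<Longrightarrow> x \<in> space q m \<Longrightarrow> (gs ! s) x \<in> space q m"
  using gs_single unfolding inFstar_def inF_def by auto

definition state :: "nat list \<Rightarrow> nat \<Rightarrow> nat list" where
  "state x s = fold (\<lambda>g y. g y) (take s gs) x"

lemma state_0 [simp]: "state x 0 = x"
  by (simp add: state_def)

lemma state_Suc: "s < t \<Longrightarrow> state x (Suc s) = (gs ! s) (state x s)"
  unfolding state_def by (simp add: take_Suc_conv_app_nth)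

lemma state_space: "x \<in> space q m \<Longrightarrow> s \<le> t \<Longrightarrow> state x s \<in> space q m"
  by (induction s) (auto simp: state_Suc step_space)

lemma state_Suc_other:
  "s < t \<Longrightarrow> x \<in> space q m \<Longrightarrow> i < m \<Longrightarrow> i \<noteq> coord s \<Longrightarrow> state x (Suc s) ! i = state x s ! i"
  by (simp add: state_Suc step_other_coord state_space)

lemma state_unwritten:
  "x \<in> space q m \<Longrightarrow> i < m \<Longrightarrow> s \<le> t \<Longrightarrow> \<forall>s'<s. coord s' \<noteq> i \<Longrightarrow> state x s ! i = x ! i"
  by (induction s) (auto simp: state_Suc_other)

lemma state_realizes: "x \<in> space q m \<Longrightarrow> take n (state x t) = h (take n x)"
  using gs_realizes by (simp add: state_def)

definition last_write :: "nat \<Rightarrow> nat \<Rightarrow> nat" where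
  "last_write s i = Max {s'. s' < s \<and> coord s' = i}"

lemma last_write:
  assumes "\<exists>s'<s. coord s' = i"
  shows "last_write s i < s" and "coord (last_write s i) = i"
    and "last_write s i < s' \<Longrightarrow> s' < s \<Longrightarrow> coord s' \<noteq> i"
proof -
  have "{s'. s' < s \<and> coord s' = i} \<noteq> {}" using assms by auto
  from Max_in[OF _ this] show "last_write s i < s" "coord (last_write s i) = i"
    unfolding last_write_def by auto
  show "coord s' \<noteq> i" if "last_write s i < s'" "s' < s"
  proof
    assume "coord s' = i"
    then have "s' \<le> last_write s i"
      unfolding last_write_def using \<open>s' < s\<close> by (intro Max_ge) auto
    then show False using \<open>last_write s i < s'\<close> by simp
  qed
qed

lemma last_write_Suc_same: "last_write (Suc s) (coord s) = s"
  unfolding last_write_def by (rule Max_eqI) auto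

lemma last_write_Suc_other: "i \<noteq> coord s \<Longrightarrow> last_write (Suc s) i = last_write s i"
  unfolding last_write_def by (metis less_Suc_eq)

definition final :: "nat \<Rightarrow> bool" where
  "final s \<longleftrightarrow> coord s < n \<and> (\<forall>s'. s < s' \<and> s' < t \<longrightarrow> coord s' \<noteq> coord s)"

definition final_steps :: "nat set" where "final_steps = {s. s < t \<and> final s}"

definition written_outputs :: "nat set" where "written_outputs = coord ` final_steps"

lemma final_last_write: "i < n \<Longrightarrow> \<exists>s<t. coord s = i \<Longrightarrow> final (last_write t i)"
  unfolding final_def using last_write by metis

lemma written_outputs_eq: "written_outputs = {i. i < n \<and> (\<exists>s<t. coord s = i)}"
proof
  show "written_outputs \<subseteq> {i. i < n \<and> (\<exists>s<t. coord s = i)}"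
    unfolding written_outputs_def final_steps_def final_def by auto
  show "{i. i < n \<and> (\<exists>s<t. coord s = i)} \<subseteq> written_outputs"
  proof
    fix i assume i: "i \<in> {i. i < n \<and> (\<exists>s<t. coord s = i)}"
    then have "last_write t i \<in> final_steps" and "coord (last_write t i) = i"
      using final_last_write last_write by (auto simp: final_steps_def)
    then show "i \<in> written_outputs" unfolding written_outputs_def by force
  qed
qed

lemma written_outputs_subset: "written_outputs \<subseteq> {0..<n}"
  unfolding written_outputs_eq by auto

lemma inj_on_coord_final: "inj_on coord final_steps"
proof (rule inj_onI)
  fix a b assume "a \<in> final_steps" "b \<in> final_steps" "coord a = coord b"
  then have "\<not> a < b" "\<not> b < a" unfolding final_steps_def final_def by auto
  then show "a = b" by simp
qed

lemma card_written_outputs: "card written_outputs = card final_steps"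
  unfolding written_outputs_def using card_image[OF inj_on_coord_final] .

lemma card_final_steps_le: "card final_steps \<le> t"
  using card_mono[of "{..<t}" final_steps] unfolding final_steps_def by auto

lemma Omega_le_card_written: "Omega q n h \<le> card written_outputs"
proof -
  have "{i. i < n \<and> \<not> trivial_coord q n h i} \<subseteq> written_outputs"
  proof (rule subsetI, rule ccontr)
    fix i assume "i \<in> {i. i < n \<and> \<not> trivial_coord q n h i}" "i \<notin> written_outputs"
    then have i: "i < n" and nontriv: "\<not> trivial_coord q n h i"
      and unwritten: "\<forall>s<t. coord s \<noteq> i"
      using written_outputs_eq by auto
    have "h z ! i = z ! i" if z: "z \<in> space q n" for z
    proof -
      let ?x = "z @ replicate (m - n) 0"
      have x: "?x \<in> space q m" and z_eq: "take n ?x = z"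
        using space_pad[of z q n n m] z n_le_m q_pos by (auto simp: space_def)
      have "h z ! i = state ?x t ! i" using state_realizes[OF x] z_eq i by (metis nth_take)
      also have "\<dots> = ?x ! i" using state_unwritten[OF x] unwritten i n_le_m by simp
      finally show ?thesis using z i by (simp add: space_def nth_append)
    qed
    then show False using nontriv unfolding trivial_coord_def by blast
  qed
  then show ?thesis
    unfolding Omega_def using written_outputs_subset
    by (meson card_mono finite_atLeastLessThan finite_subset)
qed

definition aux :: nat where "aux = t - card final_steps"

definition N :: nat where "N = n + aux"

definition aux_index :: "nat \<Rightarrow> nat" where "aux_index s = card {s'. s' < s \<and> \<not> final s'}"

definition slot :: "nat \<Rightarrow> nat" where
  "slot s = (if final s then coord s else n + aux_index s)"

lemma n_le_N: "n \<le> N"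
  unfolding N_def by simp

lemma aux_index_mono: "s < s' \<Longrightarrow> \<not> final s \<Longrightarrow> aux_index s < aux_index s'"
  unfolding aux_index_def by (intro psubset_card_mono) auto

lemma aux_index_less: assumes "s < t" "\<not> final s" shows "aux_index s < aux"
proof -
  have "{s'. s' < t \<and> \<not> final s'} = {..<t} - final_steps"
    unfolding final_steps_def by auto
  then have "card {s'. s' < t \<and> \<not> final s'} = aux"
    unfolding aux_def by (simp add: card_Diff_subset final_steps_def subset_eq)
  moreover have "aux_index s < card {s'. s' < t \<and> \<not> final s'}"
    unfolding aux_index_def using assms by (intro psubset_card_mono) auto
  ultimately show ?thesis by simp
qed

lemma slot_less: "s < t \<Longrightarrow> slot s < N"
  unfolding slot_def N_def using aux_index_less by (auto simp: final_def)

lemma slot_inj: assumes "s < t" "s' < t" "slot s = slot s'" shows "s = s'"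
proof -
  have final_iff: "final r \<longleftrightarrow> slot r < n" for r unfolding slot_def final_def by auto
  consider "final s" "final s'" | "\<not> final s" "\<not> final s'"
    using assms(3) final_iff by metis
  then show ?thesis
  proof cases
    case 1
    then have "coord s = coord s'" using assms(3) by (simp add: slot_def)
    then show ?thesis
      using 1 assms(1,2) inj_on_coord_final by (auto simp: final_steps_def inj_on_def)
  next
    case 2
    then have "aux_index s = aux_index s'" using assms(3) by (simp add: slot_def)
    then show ?thesis using 2 aux_index_mono by (metis less_irrefl linorder_neqE_nat)
  qed
qed

lemma slot_not_unwritten: "s < t \<Longrightarrow> i < n \<Longrightarrow> i \<notin> written_outputs \<Longrightarrow> slot s \<noteq> i"
  unfolding slot_def written_outputs_def final_steps_def by auto

text \<open>decode y s is the state of the realisation after s steps, read off the variables y of the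
  sequentialization. The coordinates \<ge> n start at 0; any start value would do, since the
  realisation works for all of them.\<close>

definition decode :: "nat list \<Rightarrow> nat \<Rightarrow> nat list" where
  "decode y s = map (\<lambda>i. if \<exists>s'<s. coord s' = i then y ! slot (last_write s i)
                          else if i < n then y ! i else 0) [0..<m]"

definition step_at :: "nat \<Rightarrow> nat" where "step_at j = (THE s. s < t \<and> slot s = j)"

definition sim_coord :: "nat \<Rightarrow> nat list \<Rightarrow> nat" where
  "sim_coord j y = (if \<exists>s<t. slot s = j
     then (gs ! step_at j) (decode y (step_at j)) ! coord (step_at j) else y ! j)"

definition sim :: "nat list \<Rightarrow> nat list" where "sim y = map (\<lambda>j. sim_coord j y) [0..<N]"

definition word :: "nat list" where
  "word = map slot [0..<t] @ filter (\<lambda>i. i \<notin> written_outputs) [0..<n]"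

lemma sim_coord_slot:
  assumes s: "s < t" shows "sim_coord (slot s) y = (gs ! s) (decode y s) ! coord s"
proof -
  have "step_at (slot s) = s"
    unfolding step_at_def using s by (intro the_equality) (auto dest: slot_inj)
  then show ?thesis using s unfolding sim_coord_def by auto
qed

lemma sim_coord_unused: "\<forall>s<t. slot s \<noteq> j \<Longrightarrow> sim_coord j y = y ! j"
  unfolding sim_coord_def by auto

lemma decode_space: assumes y: "y \<in> space q N" and s: "s \<le> t" shows "decode y s \<in> space q m"
proof -
  have "decode y s ! i < q" if i: "i < m" for i
  proof (cases "\<exists>s'<s. coord s' = i")
    case True
    have "last_write s i < t" using last_write(1)[OF True] s by simp
    then have "y ! slot (last_write s i) < q" using space_nth_less[OF y slot_less] by simp
    then show ?thesis using True i by (simp add: decode_def)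
  next
    case False
    have "i < n \<Longrightarrow> y ! i < q" using space_nth_less[OF y] n_le_N by simp
    then show ?thesis using False i q_pos by (auto simp: decode_def)
  qed
  then show ?thesis by (simp add: space_iff_nth decode_def)
qed

lemma sim_coord_less: assumes y: "y \<in> space q N" and j: "j < N" shows "sim_coord j y < q"
proof (cases "\<exists>s<t. slot s = j")
  case True
  then obtain s where s: "s < t" "slot s = j" by auto
  have "(gs ! s) (decode y s) \<in> space q m" using step_space decode_space[OF y] s by simp
  from space_nth_less[OF this coord_less[OF s(1)]] show ?thesis
    using sim_coord_slot[OF s(1)] s(2) by simp
next
  case False
  then show ?thesis using sim_coord_unused space_nth_less[OF y j] by simp
qed

lemma sim_inF: "inF N q sim"
  unfolding inF_def using sim_coord_less by (auto simp: space_def sim_def)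

lemma upd_sim: "j < N \<Longrightarrow> upd sim j y = y[j := sim_coord j y]"
  unfolding upd_def sim_def by simp

definition sim_state :: "nat list \<Rightarrow> nat \<Rightarrow> nat list" where
  "sim_state y s = seq_upd sim (map slot [0..<s]) y"

lemma sim_state_Suc: "s < t \<Longrightarrow> sim_state y (Suc s) = (sim_state y s)[slot s := sim_coord (slot s) (sim_state y s)]"
  unfolding sim_state_def seq_upd_def using upd_sim slot_less by simp

lemma sim_state_space: "y \<in> space q N \<Longrightarrow> s \<le> t \<Longrightarrow> sim_state y s \<in> space q N"
  by (induction s) (auto simp: sim_state_def seq_upd_def upd_sim slot_less sim_coord_less
      intro: space_list_update)

lemma decode_nth_written:
  "i < m \<Longrightarrow> \<exists>s'<s. coord s' = i \<Longrightarrow> decode y s ! i = y ! slot (last_write s i)"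
  by (simp add: decode_def)

lemma decode_nth_unwritten:
  "i < m \<Longrightarrow> \<not> (\<exists>s'<s. coord s' = i) \<Longrightarrow> decode y s ! i = (if i < n then y ! i else 0)"
  by (auto simp: decode_def)

lemma decode_0: "length y = N \<Longrightarrow> decode y 0 = take n y @ replicate (m - n) 0"
  using n_le_N n_le_m by (intro nth_equalityI) (auto simp: decode_def nth_append)

lemma decode_Suc_nth:
  assumes s: "s < t" and y: "length y = N" and i: "i < m"
  shows "decode (y[slot s := v]) (Suc s) ! i = (if i = coord s then v else decode y s ! i)"
proof (cases "i = coord s")
  case True
  moreover have "\<exists>s'<Suc s. coord s' = i" using True by blast
  ultimately show ?thesis
    using i y slot_less[OF s] by (simp add: decode_nth_written last_write_Suc_same)
next
  case other: False
  then have written_iff: "(\<exists>s'<Suc s. coord s' = i) \<longleftrightarrow> (\<exists>s'<s. coord s' = i)"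
    using less_Suc_eq by auto
  show ?thesis
  proof (cases "\<exists>s'<s. coord s' = i")
    case True
    then have "slot (last_write s i) \<noteq> slot s"
      using last_write(1) s slot_inj by (metis less_irrefl order.strict_trans)
    then show ?thesis using True i other written_iff
      by (simp add: decode_nth_written last_write_Suc_other)
  next
    case False
    have "i < n \<Longrightarrow> slot s \<noteq> i" using other by (auto simp: slot_def)
    moreover have "\<not> (\<exists>s'<Suc s. coord s' = i)" using False written_iff by blast
    ultimately show ?thesis
      using decode_nth_unwritten[OF i] False other by simp
  qed
qed

lemma decode_sim_state:
  assumes y: "y \<in> space q N"
  shows "s \<le> t \<Longrightarrow> decode (sim_state y s) s = state (take n y @ replicate (m - n) 0) s"
proof (induction s)
  case 0
  then show ?case using y by (simp add: sim_state_def seq_upd_def decode_0 space_def)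
next
  case (Suc s)
  let ?x = "take n y @ replicate (m - n) 0" and ?z = "sim_state y s"
  have s: "s < t" using Suc.prems by simp
  have x: "?x \<in> space q m" using space_pad[OF y n_le_N n_le_m q_pos] .
  have z: "length ?z = N" using sim_state_space[OF y] s by (simp add: space_def)
  have IH: "decode ?z s = state ?x s" using Suc s by simp
  have new_value: "sim_coord (slot s) ?z = state ?x (Suc s) ! coord s"
    using sim_coord_slot[OF s] IH state_Suc[OF s] by simp
  show ?case
  proof (rule nth_equalityI)
    show "length (decode (sim_state y (Suc s)) (Suc s)) = length (state ?x (Suc s))"
      using state_space[OF x] Suc.prems by (simp add: decode_def space_def)
  next
    fix i assume "i < length (decode (sim_state y (Suc s)) (Suc s))"
    then have i: "i < m" by (simp add: decode_def)
    show "decode (sim_state y (Suc s)) (Suc s) ! i = state ?x (Suc s) ! i"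
      using decode_Suc_nth[OF s z i] new_value IH state_Suc_other[OF s x i]
      by (simp add: sim_state_Suc[OF s])
  qed
qed

lemma decode_outputs_at_end: assumes i: "i < n" shows "decode z t ! i = z ! i"
proof (cases "\<exists>s<t. coord s = i")
  case True
  then have "slot (last_write t i) = i"
    using final_last_write[OF i] last_write(2) by (simp add: slot_def)
  then show ?thesis using True i n_le_m by (simp add: decode_nth_written)
next
  case False
  then show ?thesis using i n_le_m decode_nth_unwritten by simp
qed

lemma sim_sequentializes: "sequentializes q n h N sim word"
  unfolding sequentializes_def
proof (intro conjI ballI)
  show "n \<le> N" by (rule n_le_N)
next
  fix y assume y: "y \<in> space q N"
  let ?x = "take n y @ replicate (m - n) 0"
  have "fold (upd sim) (filter (\<lambda>i. i \<notin> written_outputs) [0..<n]) = id"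
    using slot_not_unwritten n_le_N
    by (intro fold_id) (auto simp: upd_def sim_def sim_coord_unused)
  then have seq_word: "seq_upd sim word y = sim_state y t"
    unfolding seq_upd_def word_def sim_state_def by simp
  have x: "?x \<in> space q m" using space_pad[OF y n_le_N n_le_m q_pos] .
  have "take n (sim_state y t) = take n (state ?x t)"
  proof (rule nth_equalityI)
    show "length (take n (sim_state y t)) = length (take n (state ?x t))"
      using sim_state_space[OF y] state_space[OF x] n_le_N n_le_m by (simp add: space_def)
  next
    fix i assume "i < length (take n (sim_state y t))"
    then have i: "i < n" by simp
    have "sim_state y t ! i = decode (sim_state y t) t ! i"
      using decode_outputs_at_end[OF i] by simp
    also have "\<dots> = state ?x t ! i" using decode_sim_state[OF y] by simp
    finally show "take n (sim_state y t) ! i = take n (state ?x t) ! i" using i by simp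
  qed
  moreover have "take n ?x = take n y" using y n_le_N by (simp add: space_def)
  ultimately show "take n (seq_upd sim word y) = h (take n y)"
    using state_realizes[OF x] seq_word by simp
qed

lemma perm_word_word: "perm_word N word"
proof -
  let ?rest = "filter (\<lambda>i. i \<notin> written_outputs) [0..<n]"
  have distinct: "distinct word"
    unfolding word_def using slot_inj slot_not_unwritten
    by (fastforce simp: distinct_map inj_on_def)
  have "length ?rest = card ({0..<n} - written_outputs)"
    using distinct_card[of ?rest] by (simp add: set_diff_eq)
  also have "\<dots> = n - card final_steps"
    using card_Diff_subset[OF _ written_outputs_subset] finite_subset[OF written_outputs_subset]
    by (simp add: card_written_outputs)
  finally have "card (set word) = N"
    using distinct_card[OF distinct] card_final_steps_le card_written_outputs
      card_mono[OF _ written_outputs_subset]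
    by (simp add: word_def N_def aux_def)
  moreover have "set word \<subseteq> {0..<N}"
    unfolding word_def using slot_less n_le_N by auto
  ultimately have "set word = {0..<N}" by (simp add: card_subset_eq)
  with distinct show ?thesis unfolding perm_word_def by simp
qed

lemma kappa_min_le_aux: "kappa_min q n h \<le> aux"
  unfolding kappa_min_def
  using sim_inF perm_word_word sim_sequentializes by (intro Least_le) (auto simp: N_def)

lemma Omega_plus_kappa_min_le_length: "Omega q n h + kappa_min q n h \<le> t"
  using Omega_le_card_written kappa_min_le_aux card_written_outputs card_final_steps_le
  unfolding aux_def by linarith

end

lemma Omega_plus_kappa_min_le_realizes:
  assumes "0 < q" "n \<le> m" "realizes q n h m t"
  shows "Omega q n h + kappa_min q n h \<le> t"
proof -
  obtain gs where "length gs = t" "\<forall>g\<in>set gs. inFstar m q g"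
    "\<forall>x\<in>space q m. take n (fold (\<lambda>g y. g y) gs x) = h (take n x)"
    using assms(3) unfolding realizes_def by blast
  then interpret realization q n m h gs
    using assms(1,2) by unfold_locales auto
  show ?thesis using Omega_plus_kappa_min_le_length \<open>length gs = t\<close> by simp
qed

section \<open>Every map has a realisation\<close>

definition copy_step :: "nat \<Rightarrow> nat \<Rightarrow> nat list \<Rightarrow> nat list" where
  "copy_step n i y = y[n + i := y ! i]"

definition eval_step :: "(nat list \<Rightarrow> nat list) \<Rightarrow> nat \<Rightarrow> nat \<Rightarrow> nat list \<Rightarrow> nat list" where
  "eval_step h n i y = y[i := h (drop n y) ! i]"

lemma fold_copy_steps:
  assumes "length x = 2 * n"
  shows "j \<le> n \<Longrightarrow> fold (copy_step n) [0..<j] x = take n x @ take j x @ drop (n + j) x"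
proof (induction j)
  case (Suc j)
  have "drop (n + j) x = x ! (n + j) # drop (Suc (n + j)) x"
    using Suc.prems assms by (simp add: Cons_nth_drop_Suc)
  then show ?case using Suc assms
    by (simp add: copy_step_def list_update_append nth_append take_Suc_conv_app_nth)
qed (use assms in simp)

lemma fold_eval_steps:
  assumes "length u = n" "length v = n" "length (h v) = n"
  shows "j \<le> n \<Longrightarrow> fold (eval_step h n) [0..<j] (u @ v) = take j (h v) @ drop j u @ v"
proof (induction j)
  case (Suc j)
  let ?y = "take j (h v) @ drop j u @ v"
  have "drop n ?y = v" using Suc.prems assms by simp
  moreover have "drop j u = u ! j # drop (Suc j) u"
    using Suc.prems assms by (simp add: Cons_nth_drop_Suc)
  ultimately show ?case using Suc assms
    by (simp add: eval_step_def list_update_append take_Suc_conv_app_nth)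
qed simp

lemma realizes_by_copying:
  assumes q: "0 < q" and h: "inF n q h"
  shows "realizes q n h (2 * n) (2 * n)"
  unfolding realizes_def
proof (intro exI conjI ballI)
  let ?gs = "map (copy_step n) [0..<n] @ map (eval_step h n) [0..<n]"
  show "length ?gs = 2 * n" by simp
next
  fix g assume "g \<in> set (map (copy_step n) [0..<n] @ map (eval_step h n) [0..<n])"
  then consider i where "i < n" "g = copy_step n i" | i where "i < n" "g = eval_step h n i"
    by auto
  then show "inFstar (2 * n) q g"
  proof cases
    case (1 i)
    have "inFstar (2 * n) q (\<lambda>x. x[n + i := x ! i])"
      using 1(1) by (intro inFstar_single_update) (auto simp: space_nth_less)
    then show ?thesis using 1(2) by (simp add: copy_step_def[abs_def])
  next
    case (2 i)
    have "h (drop n x) ! i < q" if "x \<in> space q (2 * n)" for x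
    proof -
      have "drop n x \<in> space q n" using that by (auto simp: space_def dest: in_set_dropD)
      then show ?thesis using h 2(1) space_nth_less unfolding inF_def by blast
    qed
    then have "inFstar (2 * n) q (\<lambda>x. x[i := h (drop n x) ! i])"
      using 2(1) by (intro inFstar_single_update) auto
    then show ?thesis using 2(2) by (simp add: eval_step_def[abs_def])
  qed
next
  fix x assume x: "x \<in> space q (2 * n)"
  then have lx: "length x = 2 * n" by (simp add: space_def)
  have "take n x \<in> space q n" using x by (auto simp: space_def dest: in_set_takeD)
  then have lh: "length (h (take n x)) = n" using h by (simp add: inF_def space_def)
  show "take n (fold (\<lambda>g y. g y) (map (copy_step n) [0..<n] @ map (eval_step h n) [0..<n]) x)
      = h (take n x)"
    using fold_copy_steps[OF lx] fold_eval_steps[of "take n x" n "take n x" h] lx lh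
    by (simp add: fold_map comp_def)
qed

text \<open>Lstar is a LEAST over a set of lengths that might be empty; this witness makes it attained.
  The hypotheses q \<ge> 2 and n \<ge> 1 are stronger than needed: q > 0 suffices.\<close>

theorem mainTheorem9:
  fixes q n :: nat and h :: "nat list \<Rightarrow> nat list"
  assumes "q \<ge> 2" and "n \<ge> 1" and "inF n q h"
  shows "Omega q n h + kappa_min q n h \<le> Lstar q n h"
proof -
  have q: "0 < q" using assms(1) by simp
  have "\<exists>m\<ge>n. realizes q n h m (2 * n)"
    using realizes_by_copying[OF q assms(3)] by (intro exI[of _ "2 * n"]) simp
  then have "\<exists>m\<ge>n. realizes q n h m (Lstar q n h)"
    unfolding Lstar_def by (rule LeastI)
  then obtain m where "n \<le> m" "realizes q n h m (Lstar q n h)" by blast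
  then show ?thesis using Omega_plus_kappa_min_le_realizes[OF q] by blast
qed

end
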